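(* Let $G=\overline{B(K_m,K_n)}$ and let $S$ be a semi-transitive orientation of $G$. Then every vertex $x$ of $G$ is of type A, type B, or type C with respect to the clique not containing $x$.
   Context: $\overline{B(K_m,K_n)}$ denotes a graph whose vertex set is the disjoint union of two cliques $K_m$ and $K_n$ (of sizes $m,n$) with arbitrary edges between them. An orientation is semi-transitive if it is acyclic and shortcut-free, where a shortcut is an induced subgraph on vertices $v_0,v_1,\dots,v_t$ ($t\ge 3$) such that $v_0\to v_1\to\cdots\to v_t$ is a directed path, $v_0\to v_t$ is an edge, and some pair $v_i,v_j$ is non-adjacent. Any acyclic orientation induces a transitive orientation on each clique; so for a clique $K$ with $l$ vertices there is a directed Hamiltonian path $\vec P=p_1\to p_2\to\cdots\to p_l$ with $p_i\to p_j$ iff $i<j$ ($p_1$ the source, $p_l$ the sink). For a vertex $x$ in one clique, let $K'$ be the other clique with path $p_1\to\cdots\to p_l$. Then $x$ is of type A if its neighbours in $K'$ form a (possibly empty) set of consecutive vertices $p_a,p_{a+1},\dots,p_b$ of $\vec P$ and all edges between $x$ and these are directed away from $x$; type B if the same holds with all these edges directed towards $x$; type C if there are $1\le s<t\le l$ such that the neighbours of $x$ in $K'$ are exactly $p_1,\dots,p_s$ and $p_t,\dots,p_l$, with $p_i\to x$ for $i\le s$ and $x\to p_i$ for $i\ge t$ (the middle group $p_{s+1},\dots,p_{t-1}$ of non-neighbours may be empty). For type C, $\{p_1,\dots,p_s\}$ is the source-group and $\{p_t,\dots,p_l\}$ the sink-group of $x$. *)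

theory Defs
  imports Main
begin

text \<open>The graph co-B(K_m,K_n): vertex set K1 \<union> K2 (disjoint cliques, finite),
  a symmetric irreflexive edge relation E on K1 \<union> K2 in which each Ki is a clique;
  edges between K1 and K2 are arbitrary.\<close>
definition coB_graph :: "'a set \<Rightarrow> 'a set \<Rightarrow> ('a \<Rightarrow> 'a \<Rightarrow> bool) \<Rightarrow> bool" where
  "coB_graph K1 K2 E \<longleftrightarrow>
     finite K1 \<and> finite K2 \<and> K1 \<inter> K2 = {} \<and>
     (\<forall>x y. E x y \<longrightarrow> x \<in> K1 \<union> K2 \<and> y \<in> K1 \<union> K2) \<and>
     (\<forall>x y. E x y \<longrightarrow> E y x) \<and> (\<forall>x. \<not> E x x) \<and>
     (\<forall>x\<in>K1. \<forall>y\<in>K1. x \<noteq> y \<longrightarrow> E x y) \<and>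
     (\<forall>x\<in>K2. \<forall>y\<in>K2. x \<noteq> y \<longrightarrow> E x y)"

definition orientation :: "('a \<Rightarrow> 'a \<Rightarrow> bool) \<Rightarrow> ('a \<Rightarrow> 'a \<Rightarrow> bool) \<Rightarrow> bool" where
  "orientation E D \<longleftrightarrow>
     (\<forall>x y. D x y \<longrightarrow> E x y) \<and> (\<forall>x y. E x y \<longrightarrow> D x y \<or> D y x) \<and>
     (\<forall>x y. \<not> (D x y \<and> D y x))"

definition acyclic_orient :: "('a \<Rightarrow> 'a \<Rightarrow> bool) \<Rightarrow> bool" where
  "acyclic_orient D \<longleftrightarrow> acyclic {(x, y). D x y}"

definition is_shortcut :: "('a \<Rightarrow> 'a \<Rightarrow> bool) \<Rightarrow> ('a \<Rightarrow> 'a \<Rightarrow> bool) \<Rightarrow> 'a list \<Rightarrow> bool" where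
  "is_shortcut E D vs \<longleftrightarrow>
     length vs \<ge> 4 \<and> distinct vs \<and>
     (\<forall>i. i + 1 < length vs \<longrightarrow> D (vs ! i) (vs ! (i + 1))) \<and>
     D (hd vs) (last vs) \<and>
     (\<exists>i j. i < length vs \<and> j < length vs \<and> i \<noteq> j \<and> \<not> E (vs ! i) (vs ! j))"

definition semi_transitive :: "'a set \<Rightarrow> ('a \<Rightarrow> 'a \<Rightarrow> bool) \<Rightarrow> ('a \<Rightarrow> 'a \<Rightarrow> bool) \<Rightarrow> bool" where
  "semi_transitive V E D \<longleftrightarrow>
     orientation E D \<and> acyclic_orient D \<and>
     \<not> (\<exists>vs. set vs \<subseteq> V \<and> is_shortcut E D vs)"

text \<open>ps = [p_1, ..., p_l] is the directed Hamiltonian path of the clique K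
  (p_i \<rightarrow> p_j iff i < j). We use 1-based access p i = ps ! (i - 1).\<close>
definition ham_path :: "('a \<Rightarrow> 'a \<Rightarrow> bool) \<Rightarrow> 'a set \<Rightarrow> 'a list \<Rightarrow> bool" where
  "ham_path D K ps \<longleftrightarrow> distinct ps \<and> set ps = K \<and>
     (\<forall>i j. i < length ps \<longrightarrow> j < length ps \<longrightarrow> (D (ps ! i) (ps ! j) \<longleftrightarrow> i < j))"

definition pth :: "'a list \<Rightarrow> nat \<Rightarrow> 'a" where
  "pth ps i = ps ! (i - 1)"

definition nbrs_in :: "('a \<Rightarrow> 'a \<Rightarrow> bool) \<Rightarrow> 'a \<Rightarrow> 'a set \<Rightarrow> 'a set" where
  "nbrs_in E x K = {y \<in> K. E x y}"

definition typeA :: "('a \<Rightarrow> 'a \<Rightarrow> bool) \<Rightarrow> ('a \<Rightarrow> 'a \<Rightarrow> bool) \<Rightarrow> 'a list \<Rightarrow> 'a \<Rightarrow> bool" where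
  "typeA E D ps x \<longleftrightarrow>
     (\<exists>a b. 1 \<le> a \<and> b \<le> length ps \<and>
        nbrs_in E x (set ps) = {pth ps i | i. a \<le> i \<and> i \<le> b}) \<and>
     (\<forall>y \<in> nbrs_in E x (set ps). D x y)"

definition typeB :: "('a \<Rightarrow> 'a \<Rightarrow> bool) \<Rightarrow> ('a \<Rightarrow> 'a \<Rightarrow> bool) \<Rightarrow> 'a list \<Rightarrow> 'a \<Rightarrow> bool" where
  "typeB E D ps x \<longleftrightarrow>
     (\<exists>a b. 1 \<le> a \<and> b \<le> length ps \<and>
        nbrs_in E x (set ps) = {pth ps i | i. a \<le> i \<and> i \<le> b}) \<and>
     (\<forall>y \<in> nbrs_in E x (set ps). D y x)"

definition typeC :: "('a \<Rightarrow> 'a \<Rightarrow> bool) \<Rightarrow> ('a \<Rightarrow> 'a \<Rightarrow> bool) \<Rightarrow> 'a list \<Rightarrow> 'a \<Rightarrow> bool" where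
  "typeC E D ps x \<longleftrightarrow>
     (\<exists>s t. 1 \<le> s \<and> s < t \<and> t \<le> length ps \<and>
        nbrs_in E x (set ps) =
          {pth ps i | i. 1 \<le> i \<and> i \<le> s} \<union> {pth ps i | i. t \<le> i \<and> i \<le> length ps} \<and>
        (\<forall>i. 1 \<le> i \<and> i \<le> s \<longrightarrow> D (pth ps i) x) \<and>
        (\<forall>i. t \<le> i \<and> i \<le> length ps \<longrightarrow> D x (pth ps i)))"

end

(* Acyclicity
   forbids x -> p_i -> p_j -> x for i < j, so every in-neighbour of x on the path
   precedes every out-neighbour.  A non-neighbour p_k of x would complete a shortcut
   x -> p_i -> p_k -> p_j or p_i -> p_k -> p_j -> x whenever p_i, p_j (i < k < j) are
   both out- or both in-neighbours, so each kind of neighbour forms an interval; and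
   when both kinds occur, the shortcuts p_k -> p_i -> x -> p_j (k < i) and
   p_i -> x -> p_j -> p_k (j < k) make them an initial and a final segment. *)

theory Submission
  imports Defs
begin

lemma semi_transitive_asym:
  assumes "semi_transitive V E D" "D a b"
  shows "\<not> D b a"
  using assms unfolding semi_transitive_def orientation_def by blast

lemma semi_transitive_no_3_cycle:
  assumes "semi_transitive V E D" "D a b" "D b c"
  shows "\<not> D c a"
proof
  assume "D c a"
  with assms(2,3) have "(a, a) \<in> {(u, v). D u v}\<^sup>+"
    by (blast intro: trancl_into_trancl r_into_trancl)
  with assms(1) show False
    unfolding semi_transitive_def acyclic_orient_def acyclic_def by blast
qed

lemma semi_transitive_4_path_adjacent:
  assumes st: "semi_transitive V E D" and "{a, b, c, d} \<subseteq> V" "distinct [a, b, c, d]"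
    and "D a b" "D b c" "D c d" "D a d"
    and u: "u \<in> {a, b, c, d}" and v: "v \<in> {a, b, c, d}" and "u \<noteq> v"
  shows "E u v"
proof (rule ccontr)
  let ?vs = "[a, b, c, d]"
  assume "\<not> E u v"
  moreover obtain i j where "i < length ?vs" "?vs ! i = u" "j < length ?vs" "?vs ! j = v"
    using u v by (metis in_set_conv_nth list.set(1,2))
  ultimately have "\<exists>i j. i < length ?vs \<and> j < length ?vs \<and> i \<noteq> j \<and> \<not> E (?vs ! i) (?vs ! j)"
    using \<open>u \<noteq> v\<close> by blast
  moreover have "\<forall>i. i + 1 < length ?vs \<longrightarrow> D (?vs ! i) (?vs ! (i + 1))"
    using assms(4-6) by (auto simp: less_Suc_eq)
  ultimately have "is_shortcut E D ?vs"
    unfolding is_shortcut_def using assms(3,7) by simp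
  with st assms(2) show False
    unfolding semi_transitive_def by auto
qed

lemma finite_convex_nat_set_eq_atLeastLessThan:
  fixes S :: "nat set"
  assumes "S \<subseteq> {..<n}"
    and convex: "\<And>i k j. i \<in> S \<Longrightarrow> j \<in> S \<Longrightarrow> i < k \<Longrightarrow> k < j \<Longrightarrow> k \<in> S"
  shows "\<exists>a b. b \<le> n \<and> S = {a..<b}"
proof (cases "S = {}")
  case True
  then show ?thesis by auto
next
  case False
  have "finite S" using assms(1) finite_subset by blast
  with False have min: "Min S \<in> S" and max: "Max S \<in> S" by simp_all
  have "S = {Min S..<Suc (Max S)}"
  proof (intro equalityI subsetI)
    fix k assume "k \<in> S"
    with \<open>finite S\<close> show "k \<in> {Min S..<Suc (Max S)}" by (simp add: less_Suc_eq_le)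
  next
    fix k assume "k \<in> {Min S..<Suc (Max S)}"
    then consider "k = Min S" | "k = Max S" | "Min S < k" "k < Max S"
      by fastforce
    then show "k \<in> S"
      using convex[OF min max, of k] min max by cases auto
  qed
  moreover have "Suc (Max S) \<le> n"
    using max assms(1) by (simp add: Suc_le_eq subset_eq)
  ultimately show ?thesis by blast
qed

lemma pth_set_eq_image:
  "{pth ps i | i. Suc a \<le> i \<and> i \<le> b} = (!) ps ` {a..<b}"
proof (intro equalityI subsetI)
  fix y assume "y \<in> {pth ps i | i. Suc a \<le> i \<and> i \<le> b}"
  then obtain i where "Suc a \<le> i" "i \<le> b" "y = ps ! (i - 1)"
    unfolding pth_def by auto
  then show "y \<in> (!) ps ` {a..<b}" by (intro image_eqI[of _ _ "i - 1"]) auto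
next
  fix y assume "y \<in> (!) ps ` {a..<b}"
  then obtain j where "a \<le> j" "j < b" "y = ps ! j" by auto
  then show "y \<in> {pth ps i | i. Suc a \<le> i \<and> i \<le> b}"
    unfolding pth_def by (intro CollectI exI[of _ "Suc j"]) auto
qed

lemma typeA_intro:
  assumes "nbrs_in E x (set ps) = (!) ps ` {a..<b}" "b \<le> length ps"
    and "\<And>y. y \<in> nbrs_in E x (set ps) \<Longrightarrow> D x y"
  shows "typeA E D ps x"
proof -
  have "nbrs_in E x (set ps) = {pth ps i | i. Suc a \<le> i \<and> i \<le> b}"
    using assms(1) by (simp add: pth_set_eq_image)
  moreover have "(1::nat) \<le> Suc a" by simp
  ultimately show ?thesis
    unfolding typeA_def using assms(2,3) by blast
qed

lemma typeB_intro:
  assumes "nbrs_in E x (set ps) = (!) ps ` {a..<b}" "b \<le> length ps"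
    and "\<And>y. y \<in> nbrs_in E x (set ps) \<Longrightarrow> D y x"
  shows "typeB E D ps x"
proof -
  have "nbrs_in E x (set ps) = {pth ps i | i. Suc a \<le> i \<and> i \<le> b}"
    using assms(1) by (simp add: pth_set_eq_image)
  moreover have "(1::nat) \<le> Suc a" by simp
  ultimately show ?thesis
    unfolding typeB_def using assms(2,3) by blast
qed

lemma typeC_intro:
  assumes "nbrs_in E x (set ps) = (!) ps ` ({0..<s} \<union> {t..<length ps})"
    and "0 < s" "s \<le> t" "t < length ps"
    and "\<And>j. j < s \<Longrightarrow> D (ps ! j) x" "\<And>j. t \<le> j \<Longrightarrow> j < length ps \<Longrightarrow> D x (ps ! j)"
  shows "typeC E D ps x"
proof -
  have "nbrs_in E x (set ps) =
      {pth ps i | i. 1 \<le> i \<and> i \<le> s} \<union> {pth ps i | i. Suc t \<le> i \<and> i \<le> length ps}"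
    using assms(1) pth_set_eq_image[of ps 0 s] pth_set_eq_image[of ps t "length ps"]
    by (simp add: image_Un)
  moreover have "\<forall>i. 1 \<le> i \<and> i \<le> s \<longrightarrow> D (pth ps i) x"
    using assms(5) unfolding pth_def by auto
  moreover have "\<forall>i. Suc t \<le> i \<and> i \<le> length ps \<longrightarrow> D x (pth ps i)"
    using assms(6) unfolding pth_def by auto
  moreover have "1 \<le> s" "s < Suc t" "Suc t \<le> length ps"
    using assms(2-4) by simp_all
  ultimately show ?thesis
    unfolding typeC_def by blast
qed

locale vertex_outside_clique_path =
  fixes V :: "'a set" and E D :: "'a \<Rightarrow> 'a \<Rightarrow> bool" and K :: "'a set"
    and ps :: "'a list" and x :: 'a
  assumes semi_transitive: "semi_transitive V E D"
    and ham: "ham_path D K ps" and K_subset: "K \<subseteq> V"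
    and x_in: "x \<in> V" and x_notin: "x \<notin> K"
    and E_sym: "E u v \<Longrightarrow> E v u"
begin

lemma path_edge_iff: "i < length ps \<Longrightarrow> j < length ps \<Longrightarrow> D (ps ! i) (ps ! j) \<longleftrightarrow> i < j"
  using ham unfolding ham_path_def by blast

lemma path_nth_in_V: "j < length ps \<Longrightarrow> ps ! j \<in> V"
  using ham K_subset unfolding ham_path_def by auto

lemma path_nth_neq_x: "j < length ps \<Longrightarrow> ps ! j \<noteq> x"
  using ham x_notin unfolding ham_path_def by auto

lemma path_nth_distinct:
  "i < k \<Longrightarrow> k < j \<Longrightarrow> j < length ps \<Longrightarrow> distinct [ps ! i, ps ! k, ps ! j]"
  using ham unfolding ham_path_def by (simp add: nth_eq_iff_index_eq)

lemma adjacent_iff: "E x y \<longleftrightarrow> D x y \<or> D y x"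
  using semi_transitive E_sym unfolding semi_transitive_def orientation_def by blast

lemma in_before_out:
  assumes "i < length ps" "j < length ps" "D (ps ! i) x" "D x (ps ! j)"
  shows "i < j"
proof (rule ccontr)
  assume "\<not> i < j"
  moreover have "i \<noteq> j"
    using assms semi_transitive_asym[OF semi_transitive] by blast
  ultimately have "D (ps ! j) (ps ! i)"
    using assms(1,2) path_edge_iff by simp
  with assms(3,4) show False
    using semi_transitive_no_3_cycle[OF semi_transitive] by blast
qed

lemma out_convex:
  assumes "i < k" "k < j" "j < length ps" "D x (ps ! i)" "D x (ps ! j)"
  shows "D x (ps ! k)"
proof -
  have "E x (ps ! k)"
    using assms path_nth_distinct[OF assms(1-3)] path_nth_in_V path_nth_neq_x path_edge_iff x_in
    by (intro semi_transitive_4_path_adjacent[OF semi_transitive, of x "ps ! i" "ps ! k" "ps ! j"]) auto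
  moreover have "\<not> D (ps ! k) x"
    using assms path_edge_iff semi_transitive_no_3_cycle[OF semi_transitive, of x "ps ! i" "ps ! k"]
    by auto
  ultimately show ?thesis by (simp add: adjacent_iff)
qed

lemma in_convex:
  assumes "i < k" "k < j" "j < length ps" "D (ps ! i) x" "D (ps ! j) x"
  shows "D (ps ! k) x"
proof -
  have "E x (ps ! k)"
    using assms path_nth_distinct[OF assms(1-3)] path_nth_in_V path_nth_neq_x path_edge_iff x_in
    by (intro semi_transitive_4_path_adjacent[OF semi_transitive, of "ps ! i" "ps ! k" "ps ! j" x]) auto
  moreover have "\<not> D x (ps ! k)"
    using assms path_edge_iff semi_transitive_no_3_cycle[OF semi_transitive, of "ps ! k" "ps ! j" x]
    by auto
  ultimately show ?thesis by (simp add: adjacent_iff)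
qed

lemma in_downward_closed:
  assumes "k < i" "i < j" "j < length ps" "D (ps ! i) x" "D x (ps ! j)"
  shows "D (ps ! k) x"
proof -
  have "E x (ps ! k)"
    using assms path_nth_distinct[OF assms(1-3)] path_nth_in_V path_nth_neq_x path_edge_iff x_in
    by (intro semi_transitive_4_path_adjacent[OF semi_transitive, of "ps ! k" "ps ! i" x "ps ! j"]) auto
  moreover have "\<not> D x (ps ! k)"
    using assms path_edge_iff semi_transitive_no_3_cycle[OF semi_transitive, of "ps ! k" "ps ! i" x]
    by auto
  ultimately show ?thesis by (simp add: adjacent_iff)
qed

lemma out_upward_closed:
  assumes "i < j" "j < k" "k < length ps" "D (ps ! i) x" "D x (ps ! j)"
  shows "D x (ps ! k)"
proof -
  have "E x (ps ! k)"
    using assms path_nth_distinct[OF assms(1-3)] path_nth_in_V path_nth_neq_x path_edge_iff x_in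
    by (intro semi_transitive_4_path_adjacent[OF semi_transitive, of "ps ! i" x "ps ! j" "ps ! k"]) auto
  moreover have "\<not> D (ps ! k) x"
    using assms path_edge_iff semi_transitive_no_3_cycle[OF semi_transitive, of x "ps ! j" "ps ! k"]
    by auto
  ultimately show ?thesis by (simp add: adjacent_iff)
qed

definition in_indices :: "nat set" where
  "in_indices = {j. j < length ps \<and> D (ps ! j) x}"

definition out_indices :: "nat set" where
  "out_indices = {j. j < length ps \<and> D x (ps ! j)}"

lemma nbrs_in_eq: "nbrs_in E x (set ps) = (!) ps ` (in_indices \<union> out_indices)"
  unfolding nbrs_in_def in_indices_def out_indices_def
  by (auto simp: in_set_conv_nth adjacent_iff)

lemma typeA_if_no_in_neighbours:
  assumes "in_indices = {}"
  shows "typeA E D ps x"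
proof -
  have "\<exists>a b. b \<le> length ps \<and> out_indices = {a..<b}"
  proof (rule finite_convex_nat_set_eq_atLeastLessThan)
    show "out_indices \<subseteq> {..<length ps}" by (auto simp: out_indices_def)
    show "k \<in> out_indices" if "i \<in> out_indices" "j \<in> out_indices" "i < k" "k < j" for i k j
      using that out_convex[of i k j] by (auto simp: out_indices_def)
  qed
  then obtain a b where "b \<le> length ps" "out_indices = {a..<b}" by blast
  with assms show ?thesis
    by (intro typeA_intro) (auto simp: nbrs_in_eq out_indices_def)
qed

lemma typeB_if_no_out_neighbours:
  assumes "out_indices = {}"
  shows "typeB E D ps x"
proof -
  have "\<exists>a b. b \<le> length ps \<and> in_indices = {a..<b}"
  proof (rule finite_convex_nat_set_eq_atLeastLessThan)
    show "in_indices \<subseteq> {..<length ps}" by (auto simp: in_indices_def)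
    show "k \<in> in_indices" if "i \<in> in_indices" "j \<in> in_indices" "i < k" "k < j" for i k j
      using that in_convex[of i k j] by (auto simp: in_indices_def)
  qed
  then obtain a b where "b \<le> length ps" "in_indices = {a..<b}" by blast
  with assms show ?thesis
    by (intro typeB_intro) (auto simp: nbrs_in_eq in_indices_def)
qed

lemma in_indices_eq_initial_segment:
  assumes "in_indices \<noteq> {}" "out_indices \<noteq> {}"
  shows "in_indices = {0..<Suc (Max in_indices)}"
proof -
  define s where "s = Max in_indices"
  have "finite in_indices" unfolding in_indices_def by simp
  with assms(1) have "s \<in> in_indices" unfolding s_def by simp
  then have s_len: "s < length ps" and s_in: "D (ps ! s) x"
    unfolding in_indices_def by simp_all
  obtain j where "j \<in> out_indices" using assms(2) by blast
  then have j_len: "j < length ps" and j_out: "D x (ps ! j)"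
    unfolding out_indices_def by simp_all
  have "s < j" using in_before_out[OF s_len j_len s_in j_out] .
  show ?thesis unfolding s_def [symmetric]
  proof (intro equalityI subsetI)
    fix k assume "k \<in> in_indices"
    with \<open>finite in_indices\<close> show "k \<in> {0..<Suc s}" by (simp add: s_def less_Suc_eq_le)
  next
    fix k assume "k \<in> {0..<Suc s}"
    then consider "k = s" | "k < s" by fastforce
    then show "k \<in> in_indices"
    proof cases
      case 2
      then have "D (ps ! k) x"
        using in_downward_closed[OF _ \<open>s < j\<close> j_len s_in j_out] by blast
      with 2 s_len show ?thesis by (simp add: in_indices_def)
    qed (use \<open>s \<in> in_indices\<close> in simp)
  qed
qed

lemma out_indices_eq_final_segment:
  assumes "in_indices \<noteq> {}" "out_indices \<noteq> {}"
  shows "out_indices = {Min out_indices..<length ps}"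
proof -
  define t where "t = Min out_indices"
  have "finite out_indices" unfolding out_indices_def by simp
  with assms(2) have "t \<in> out_indices" unfolding t_def by simp
  then have t_len: "t < length ps" and t_out: "D x (ps ! t)"
    unfolding out_indices_def by simp_all
  obtain i where "i \<in> in_indices" using assms(1) by blast
  then have i_len: "i < length ps" and i_in: "D (ps ! i) x"
    unfolding in_indices_def by simp_all
  have "i < t" using in_before_out[OF i_len t_len i_in t_out] .
  show ?thesis unfolding t_def [symmetric]
  proof (intro equalityI subsetI)
    fix k assume "k \<in> out_indices"
    with \<open>finite out_indices\<close> show "k \<in> {t..<length ps}"
      by (simp add: t_def) (simp add: out_indices_def)
  next
    fix k assume "k \<in> {t..<length ps}"
    then consider "k = t" | "t < k" "k < length ps" by fastforce
    then show "k \<in> out_indices"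
    proof cases
      case 2
      then have "D x (ps ! k)"
        using out_upward_closed[OF \<open>i < t\<close> _ _ i_in t_out] by blast
      with 2 show ?thesis by (simp add: out_indices_def)
    qed (use \<open>t \<in> out_indices\<close> in simp)
  qed
qed

lemma typeC_if_in_and_out_neighbours:
  assumes "in_indices \<noteq> {}" "out_indices \<noteq> {}"
  shows "typeC E D ps x"
proof -
  define s where "s = Max in_indices"
  define t where "t = Min out_indices"
  have in_eq: "in_indices = {0..<Suc s}" and out_eq: "out_indices = {t..<length ps}"
    unfolding s_def t_def
    using in_indices_eq_initial_segment[OF assms] out_indices_eq_final_segment[OF assms] .
  have "s \<in> in_indices" "t \<in> out_indices"
    using assms in_eq out_eq by auto
  then have "s < t" "t < length ps"
    using in_before_out unfolding in_indices_def out_indices_def by auto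
  show ?thesis
  proof (rule typeC_intro)
    show "nbrs_in E x (set ps) = (!) ps ` ({0..<Suc s} \<union> {t..<length ps})"
      by (simp only: nbrs_in_eq in_eq out_eq)
    show "0 < Suc s" "Suc s \<le> t" "t < length ps"
      using \<open>s < t\<close> \<open>t < length ps\<close> by simp_all
    show "D (ps ! j) x" if "j < Suc s" for j
    proof -
      from that in_eq have "j \<in> in_indices" by simp
      then show ?thesis by (simp add: in_indices_def)
    qed
    show "D x (ps ! j)" if "t \<le> j" "j < length ps" for j
    proof -
      from that out_eq have "j \<in> out_indices" by simp
      then show ?thesis by (simp add: out_indices_def)
    qed
  qed
qed

theorem typeA_or_typeB_or_typeC: "typeA E D ps x \<or> typeB E D ps x \<or> typeC E D ps x"
  using typeA_if_no_in_neighbours typeB_if_no_out_neighbours typeC_if_in_and_out_neighbours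
  by blast

end

theorem mainTheorem10:
  fixes K1 K2 :: "'a set" and E D :: "'a \<Rightarrow> 'a \<Rightarrow> bool" and m n :: nat
  assumes "coB_graph K1 K2 E" and "card K1 = m" and "card K2 = n"
    and "semi_transitive (K1 \<union> K2) E D"
  shows "(\<forall>x \<in> K1. \<forall>ps. ham_path D K2 ps \<longrightarrow> typeA E D ps x \<or> typeB E D ps x \<or> typeC E D ps x)
       \<and> (\<forall>x \<in> K2. \<forall>ps. ham_path D K1 ps \<longrightarrow> typeA E D ps x \<or> typeB E D ps x \<or> typeC E D ps x)"
proof -
  from assms(1) have disjoint: "K1 \<inter> K2 = {}" and E_sym: "\<And>u v. E u v \<Longrightarrow> E v u"
    unfolding coB_graph_def by auto
  have types: "typeA E D ps x \<or> typeB E D ps x \<or> typeC E D ps x"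
    if "ham_path D K ps" "K \<subseteq> K1 \<union> K2" "x \<in> K1 \<union> K2" "x \<notin> K" for K ps x
  proof -
    interpret vertex_outside_clique_path "K1 \<union> K2" E D K ps x
      by (rule vertex_outside_clique_path.intro) (use assms(4) that E_sym in auto)
    show ?thesis by (rule typeA_or_typeB_or_typeC)
  qed
  show ?thesis
  proof (intro conjI ballI allI impI)
    fix x ps assume "x \<in> K1" "ham_path D K2 ps"
    with disjoint show "typeA E D ps x \<or> typeB E D ps x \<or> typeC E D ps x"
      by (intro types[of K2]) auto
  next
    fix x ps assume "x \<in> K2" "ham_path D K1 ps"
    with disjoint show "typeA E D ps x \<or> typeB E D ps x \<or> typeC E D ps x"
      by (intro types[of K1]) auto
  qed
qed

end
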